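(* Let $\mathcal{X},\mathcal{Y}$ be finite, $P_{Y|X}$ a channel, $m$ a positive integer, $P_{\bar X}$ an $m$-type on $\mathcal{X}$, $P_{\bar XY}=P_{\bar X}P_{Y|X}$, $R\ge0$, and $M=\exp(nR)$, with $n$ ranging over multiples of $m$. For a conditional type $Q_{\bar Y|\bar X}\in\mathcal{P}_n(\mathcal{Y}|P_{\bar X})$ let $(\bar X,\bar Y)\sim P_{\bar X}Q_{\bar Y|\bar X}$ and $Q_{\bar Y}$ the $\mathcal{Y}$-marginal. Then \[ \lim_{n\to\infty}-\frac1n\log\max_{Q_{\bar Y|\bar X}\in\mathcal{P}_n(\mathcal{Y}|P_{\bar X})}\Big\{\tfrac12|\mathcal{T}^n_{Q_{\bar Y}}|\exp\big(-n\,\mathbb{E}[\imath_{P_{Y|X}}(\bar Y|\bar X)]\big)\breve{\mathfrak{Y}}(M,P_{\bar X}Q_{\bar Y|\bar X})\Big\} =\inf_{Q_{\bar Y|\bar X}\in\mathcal{P}_\infty(\mathcal{Y}|P_{\bar X})}\Big\{D(P_{\bar X}Q_{\bar Y|\bar X}\|P_{\bar XY})+\tfrac12\big[R-D(P_{\bar X}Q_{\bar Y|\bar X}\|P_{\bar X}Q_{\bar Y})\big]_+\Big\}, \] where $\mathcal{P}_\infty(\mathcal{Y}|P_{\bar X})=\bigcup_{n\in m\mathbb{N}}\mathcal{P}_n(\mathcal{Y}|P_{\bar X})$ and $[f]_+=\max\{0,f\}$.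
   Context: Logs and exps use a common base; $D$ is relative entropy; $\imath_{P_{Y|X}}(y|x)=\log\frac1{P_{Y|X}(y|x)}$. $\mathcal{T}^n_Q$ is the type class of an $n$-type $Q$. $\mathcal{P}_n(\mathcal{Y}|P_{\bar X})$ is the set of conditional types $Q_{\bar Y|\bar X}$ of $y^n$ given a fixed $x^n\in\mathcal{T}^n_{P_{\bar X}}$ (i.e. $P_{\bar X}Q_{\bar Y|\bar X}$ is the joint empirical distribution of $(x^n,y^n)$ for some $y^n$). For such $Q_{\bar Y|\bar X}$ and $y^n\in\mathcal{T}^n_{Q_{\bar Y}}$, let $Q_{\bar X|\bar Y}$ be the conditional type with $Q_{\bar X|\bar Y}Q_{\bar Y}=P_{\bar X}Q_{\bar Y|\bar X}$, $\mathcal{T}^n_{Q_{\bar X|\bar Y}}(y^n)$ the set of $x^n$ whose joint empirical distribution with $y^n$ is $P_{\bar X}Q_{\bar Y|\bar X}$, $\breve p_{Q_{\bar X|\bar Y}}(y^n)=\mathbb{P}[\breve X^n\in\mathcal{T}^n_{Q_{\bar X|\bar Y}}(y^n)]$ with $\breve X^n$ uniform on $\mathcal{T}^n_{P_{\bar X}}$, and $\breve{\mathfrak{Y}}(M,P_{\bar X}Q_{\bar Y|\bar X})=\min\{2\breve p_{Q_{\bar X|\bar Y}}(y^n),M^{-1/2}\breve p^{1/2}_{Q_{\bar X|\bar Y}}(y^n)\}$ (depending on $y^n$ only through its type). *)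

theory Defs
  imports "HOL-Analysis.Analysis"
begin

definition ltype :: "'a list \<Rightarrow> 'a \<Rightarrow> real" where
  "ltype xs a = real (count_list xs a) / real (length xs)"

definition is_type :: "nat \<Rightarrow> ('a \<Rightarrow> real) \<Rightarrow> bool" where
  "is_type n P \<longleftrightarrow> (\<exists>xs. length xs = n \<and> P = ltype xs)"

definition typeclass_set :: "nat \<Rightarrow> ('a \<Rightarrow> real) \<Rightarrow> 'a list set" where
  "typeclass_set n P = {xs. length xs = n \<and> ltype xs = P}"

definition jtype :: "'x list \<Rightarrow> 'y list \<Rightarrow> ('x \<times> 'y) \<Rightarrow> real" where
  "jtype xs ys = ltype (zip xs ys)"

text \<open>Conditional types P_n(Y|P_X), each represented by the joint type P_X Q_{Y|X}
  it determines (the joint empirical distribution of (x^n,y^n) with x^n in T^n_P).\<close>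
definition cond_types :: "nat \<Rightarrow> ('x \<Rightarrow> real) \<Rightarrow> ('x \<times> 'y \<Rightarrow> real) set" where
  "cond_types n P = {jtype xs ys | xs ys. xs \<in> typeclass_set n P \<and> length ys = n}"

definition margY :: "('x \<times> 'y \<Rightarrow> real) \<Rightarrow> 'y \<Rightarrow> real" where
  "margY J y = (\<Sum>x\<in>UNIV. J (x, y))"

text \<open>breve p_{Q_{X|Y}}(y^n): probability that X^n uniform on T^n_P has joint type J with
  y^n, for a y^n of type Q_Y (the value does not depend on the choice of y^n).\<close>
definition breve_p :: "nat \<Rightarrow> ('x \<Rightarrow> real) \<Rightarrow> ('x \<times> 'y \<Rightarrow> real) \<Rightarrow> real" where
  "breve_p n P J =
     (let ys = (SOME ys. ys \<in> typeclass_set n (margY J)) in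
      real (card {xs. xs \<in> typeclass_set n P \<and> jtype xs ys = J}) / real (card (typeclass_set n P)))"

definition breve_Y :: "real \<Rightarrow> nat \<Rightarrow> ('x \<Rightarrow> real) \<Rightarrow> ('x \<times> 'y \<Rightarrow> real) \<Rightarrow> real" where
  "breve_Y M n P J = min (2 * breve_p n P J) (M powr (-1/2) * sqrt (breve_p n P J))"

text \<open>exp(-n E[i_W(Y|X)]) for (X,Y) ~ J, written as a product so that W = 0 is handled
  (exp(-infinity) = 0, and 0 * log 0 = 0).\<close>
definition chan_exp :: "nat \<Rightarrow> ('x \<Rightarrow> 'y \<Rightarrow> real) \<Rightarrow> ('x \<times> 'y \<Rightarrow> real) \<Rightarrow> real" where
  "chan_exp n W J = (\<Prod>(x,y)\<in>UNIV. if J (x,y) = 0 then 1 else W x y powr (real n * J (x,y)))"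

definition rel_ent :: "('a \<Rightarrow> real) \<Rightarrow> ('a \<Rightarrow> real) \<Rightarrow> ereal" where
  "rel_ent J K = (if \<exists>a. J a > 0 \<and> K a = 0 then \<infinity>
      else ereal (\<Sum>a\<in>UNIV. if J a = 0 then 0 else J a * ln (J a / K a)))"

definition lhs_term :: "('x \<Rightarrow> 'y \<Rightarrow> real) \<Rightarrow> real \<Rightarrow> nat \<Rightarrow> ('x \<Rightarrow> real) \<Rightarrow> ('x \<times> 'y \<Rightarrow> real) \<Rightarrow> real" where
  "lhs_term W R n P J = 1/2 * real (card (typeclass_set n (margY J))) * chan_exp n W J
      * breve_Y (exp (real n * R)) n P J"

end

theory Submission
  imports Defs "HOL-Combinatorics.Multiset_Permutations" "HOL-Real_Asymp.Real_Asymp"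
begin

(*
  By the method of types, |T_Q| = exp (n H(Q) + O(log n)), and counting joint sequences
  fibre by fibre gives breve_p = |T_J| / (|T_{Q_Y}| |T_P|) = exp (- n I(J) + O(log n)).
  Hence, for every joint type J charged only where the channel is positive,
  - ln (lhs_term J) / n equals D(J || P W) + [R - I(J)]_+ / 2 up to O(log n / n),
  uniformly in J; for all other J the lhs term vanishes and the objective is infinite.
  So the normalised maximum is uniformly close to the minimum of the objective over
  P_n. Conversely, concatenating copies of two sequences shows that every joint type of
  length m k0 is the limit of supported joint types of lengths m k for all k, and the
  objective is continuous on supported types; thus these minima converge to the
  infimum over the union of all P_n.
*)

section \<open>Types of sequences\<close>

lemma length_mult_ltype: "real (length xs) * ltype xs a = real (count_list xs a)"
  by (cases "xs = []") (simp_all add: ltype_def)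

lemma ltype_nonneg: "ltype xs a \<ge> 0"
  by (simp add: ltype_def)

lemma ltype_pos_iff: "ltype xs a > 0 \<longleftrightarrow> a \<in> set xs"
proof -
  have "count_list xs a > 0 \<longleftrightarrow> a \<in> set xs"
    by (simp add: zero_less_iff_neq_zero count_list_0_iff)
  then show ?thesis by (cases "xs = []") (simp_all add: ltype_def zero_less_divide_iff)
qed

lemma count_list_Cons_of_bool: "count_list (z # zs) a = count_list zs a + of_bool (z = a)"
  by simp

lemma sum_count_list_fst:
  "(\<Sum>y\<in>UNIV. count_list zs (x, y :: 'y::finite)) = count_list (map fst zs) x"
  by (induction zs) (auto simp: sum.distrib simp del: count_list.simps(2) simp add: count_list_Cons_of_bool)

lemma sum_count_list_snd:
  "(\<Sum>x\<in>UNIV. count_list zs (x :: 'x::finite, y)) = count_list (map snd zs) y"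
  by (induction zs) (auto simp: sum.distrib simp del: count_list.simps(2) simp add: count_list_Cons_of_bool)

lemma sum_ltype_fst: "(\<Sum>y\<in>UNIV. ltype zs (x, y :: 'y::finite)) = ltype (map fst zs) x"
  by (simp add: ltype_def flip: sum_divide_distrib of_nat_sum sum_count_list_fst)

lemma margY_ltype: "margY (ltype (zs :: ('x::finite \<times> 'y) list)) = ltype (map snd zs)"
  by (simp add: fun_eq_iff margY_def ltype_def flip: sum_divide_distrib of_nat_sum sum_count_list_snd)

lemma ltype_eq_iff_mset_eq:
  assumes "length xs = length ys"
  shows "ltype xs = ltype ys \<longleftrightarrow> mset xs = mset ys"
proof (cases "ys = []")
  case False
  then have "ltype xs = ltype ys \<longleftrightarrow> (\<forall>a. count_list xs a = count_list ys a)"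
    using assms by (simp add: ltype_def fun_eq_iff)
  then show ?thesis by (simp add: multiset_eq_iff flip: count_mset)
qed (use assms in simp)

lemma typeclass_set_ltype:
  "typeclass_set (length xs) (ltype xs) = permutations_of_multiset (mset xs)"
proof (intro set_eqI iffI)
  fix ys assume "ys \<in> typeclass_set (length xs) (ltype xs)"
  then have "length ys = length xs" "ltype ys = ltype xs" by (simp_all add: typeclass_set_def)
  then show "ys \<in> permutations_of_multiset (mset xs)"
    by (simp add: ltype_eq_iff_mset_eq permutations_of_multisetI)
next
  fix ys assume "ys \<in> permutations_of_multiset (mset xs)"
  then have "mset ys = mset xs" by (rule permutations_of_multisetD)
  moreover have "length ys = length xs" using \<open>mset ys = mset xs\<close> by (rule mset_eq_length)
  ultimately show "ys \<in> typeclass_set (length xs) (ltype xs)"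
    by (simp add: typeclass_set_def ltype_eq_iff_mset_eq)
qed

lemma finite_typeclass_set: "finite (typeclass_set n (Q :: 'a::finite \<Rightarrow> real))"
  by (rule finite_subset[OF _ finite_lists_length_eq[of UNIV n]]) (auto simp: typeclass_set_def)

lemma card_typeclass_set_ltype_pos: "card (typeclass_set (length xs) (ltype (xs :: 'a::finite list))) > 0"
  using finite_typeclass_set by (auto simp: card_gt_0_iff typeclass_set_def)

lemma card_typeclass_set_ltype:
  "real (card (typeclass_set (length xs) (ltype (xs :: 'a::finite list))))
     * (\<Prod>a\<in>UNIV. fact (count_list xs a)) = fact (length xs)"
proof -
  have "(\<Prod>a\<in>set_mset (mset xs). fact (count (mset xs) a) :: nat) = (\<Prod>a\<in>UNIV. fact (count_list xs a))"
    unfolding count_mset by (rule prod.mono_neutral_left) (auto simp: count_eq_zero_iff)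
  then have "card (typeclass_set (length xs) (ltype xs)) * (\<Prod>a\<in>UNIV. fact (count_list xs a))
               = (fact (length xs) :: nat)"
    using card_permutations_of_multiset[of "mset xs"] by (simp add: typeclass_set_ltype)
  then have "real (card (typeclass_set (length xs) (ltype xs)) * (\<Prod>a\<in>UNIV. fact (count_list xs a)))
      = real (fact (length xs) :: nat)" by (simp only:)
  then show ?thesis by (simp add: of_nat_fact)
qed

section \<open>Sizes of type classes\<close>

lemma ln_fact_Suc_bounds:
  "real (Suc k) * ln (real (Suc k)) - real (Suc k) \<le> ln (fact (Suc k))
   \<and> ln (fact (Suc k)) \<le> real (Suc k) * ln (real (Suc k)) - real (Suc k) + 1 + ln (real (Suc k))"
proof (induction k)
  case 0 then show ?case by simp
next
  case (Suc k)
  define j where "j = real (Suc k)"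
  have j: "j \<ge> 1" by (simp add: j_def)
  have fact_step: "ln (fact (Suc (Suc k)) :: real) = ln (fact (Suc k)) + ln (j + 1)"
    by (simp add: j_def ln_mult fact_Suc [of "Suc k"] add.commute del: fact_Suc)
  have "ln (j + 1) - ln j \<le> 1 / j"
    using ln_le_minus_one[of "(j + 1) / j"] j by (simp add: ln_div field_simps)
  then have le: "j * (ln (j + 1) - ln j) \<le> 1" using j by (simp add: field_simps)
  have "ln (j + 1) - ln j \<ge> 1 / (j + 1)"
    using ln_le_minus_one[of "j / (j + 1)"] j by (simp add: ln_div field_simps)
  then have ge: "(j + 1) * (ln (j + 1) - ln j) \<ge> 1" using j by (simp add: field_simps)
  have "real (Suc (Suc k)) = j + 1" by (simp add: j_def)
  then show ?case using Suc.IH le ge unfolding fact_step j_def[symmetric]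
    by (auto simp: algebra_simps)
qed

lemma ln_fact_bounds:
  "real k * ln (real k) - real k \<le> ln (fact k)
   \<and> ln (fact k) \<le> real k * ln (real k) - real k + 1 + ln (real k + 1)"
proof (cases k)
  case (Suc j)
  have "ln (real k) \<le> ln (real k + 1)" using Suc by simp
  then show ?thesis using ln_fact_Suc_bounds[of j] unfolding Suc by linarith
qed simp

definition entropy :: "('a::finite \<Rightarrow> real) \<Rightarrow> real" where
  "entropy Q = - (\<Sum>a\<in>UNIV. Q a * ln (Q a))"

lemma length_mult_entropy_ltype:
  fixes xs :: "'a::finite list"
  assumes "xs \<noteq> []"
  shows "real (length xs) * entropy (ltype xs)
    = real (length xs) * ln (real (length xs)) - (\<Sum>a\<in>UNIV. real (count_list xs a) * ln (real (count_list xs a)))"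
proof -
  let ?n = "real (length xs)" and ?c = "\<lambda>a. real (count_list xs a)"
  have n: "?n > 0" using assms by simp
  have "?n * entropy (ltype xs) = - (\<Sum>a\<in>UNIV. ?c a * ln (?c a / ?n))"
    using assms by (simp add: entropy_def sum_distrib_left mult.assoc[symmetric] length_mult_ltype ltype_def)
  also have "\<dots> = - (\<Sum>a\<in>UNIV. ?c a * ln (?c a) - ?c a * ln ?n)"
    using n by (intro arg_cong[where f = uminus] sum.cong) (auto simp: ln_div algebra_simps)
  also have "\<dots> = ?n * ln ?n - (\<Sum>a\<in>UNIV. ?c a * ln (?c a))"
    by (simp add: sum_subtractf sum_count_set flip: sum_distrib_right of_nat_sum)
  finally show ?thesis .
qed

definition type_count_err :: "nat \<Rightarrow> nat \<Rightarrow> real" where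
  "type_count_err c n = (real c + 1) * (1 + ln (real n + 1))"

lemma type_count_err_mono: "c \<le> d \<Longrightarrow> type_count_err c n \<le> type_count_err d n"
  unfolding type_count_err_def by (intro mult_right_mono) auto

lemma ln_card_typeclass_set_approx:
  fixes xs :: "'a::finite list"
  assumes "xs \<noteq> []"
  shows "\<bar>ln (real (card (typeclass_set (length xs) (ltype xs)))) - real (length xs) * entropy (ltype xs)\<bar>
    \<le> type_count_err CARD('a) (length xs)"
proof -
  define n where "n = length xs"
  define c where "c a = count_list xs a" for a
  have sum_c: "(\<Sum>a\<in>UNIV. real (c a)) = real n"
    by (simp add: c_def n_def sum_count_set flip: of_nat_sum)
  have c_le: "c a \<le> n" for a
    unfolding c_def n_def by (rule count_le_length)
  have "ln (fact n :: real)
      = ln (real (card (typeclass_set n (ltype xs))) * (\<Prod>a\<in>UNIV. fact (c a)))"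
    using card_typeclass_set_ltype[of xs] by (simp add: n_def c_def)
  also have "\<dots> = ln (real (card (typeclass_set n (ltype xs)))) + ln (\<Prod>a\<in>UNIV. fact (c a) :: real)"
    using card_typeclass_set_ltype_pos[of xs] by (simp add: n_def ln_mult)
  also have "ln (\<Prod>a\<in>UNIV. fact (c a) :: real) = (\<Sum>a\<in>UNIV. ln (fact (c a)))"
    by (rule ln_prod) auto
  finally have ln_card: "ln (real (card (typeclass_set n (ltype xs))))
      = ln (fact n) - (\<Sum>a\<in>UNIV. ln (fact (c a)))" by simp
  have "(\<Sum>a\<in>UNIV. real (c a) * ln (real (c a)) - real (c a)) \<le> (\<Sum>a\<in>UNIV. ln (fact (c a)))"
    by (rule sum_mono) (rule conjunct1[OF ln_fact_bounds])
  then have lower: "(\<Sum>a\<in>UNIV. real (c a) * ln (real (c a))) - real n \<le> (\<Sum>a\<in>UNIV. ln (fact (c a)))"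
    using sum_c by (simp add: sum_subtractf)
  have "ln (fact (c a)) \<le> real (c a) * ln (real (c a)) - real (c a) + (1 + ln (real n + 1))" for a
  proof -
    have "ln (real (c a) + 1) \<le> ln (real n + 1)" using c_le[of a] by simp
    then show ?thesis using ln_fact_bounds[of "c a"] by linarith
  qed
  then have "(\<Sum>a\<in>UNIV. ln (fact (c a)))
      \<le> (\<Sum>a\<in>UNIV. real (c a) * ln (real (c a)) - real (c a) + (1 + ln (real n + 1)))"
    by (rule sum_mono)
  then have upper: "(\<Sum>a\<in>UNIV. ln (fact (c a)))
      \<le> (\<Sum>a\<in>UNIV. real (c a) * ln (real (c a))) - real n + real CARD('a) * (1 + ln (real n + 1))"
    using sum_c by (simp add: sum.distrib sum_subtractf)
  have "real n * entropy (ltype xs) = real n * ln (real n) - (\<Sum>a\<in>UNIV. real (c a) * ln (real (c a)))"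
    using length_mult_entropy_ltype[OF assms] by (simp add: c_def n_def)
  moreover have "0 \<le> ln (real n + 1)" by simp
  ultimately show ?thesis
    using ln_card lower upper ln_fact_bounds[of n] unfolding n_def[symmetric] type_count_err_def
    by (auto simp: abs_le_iff algebra_simps)
qed

section \<open>Joint and conditional types\<close>

lemma margY_jtype:
  "length xs = length ys \<Longrightarrow> margY (jtype (xs :: 'x::finite list) ys) = ltype ys"
  by (simp add: jtype_def margY_ltype)

lemma sum_jtype_fst:
  "length xs = length ys \<Longrightarrow> (\<Sum>y\<in>UNIV. jtype xs (ys :: 'y::finite list) (x, y)) = ltype xs x"
  by (simp add: jtype_def sum_ltype_fst)

definition cond_typeclass_set :: "nat \<Rightarrow> ('x \<Rightarrow> real) \<Rightarrow> ('x \<times> 'y \<Rightarrow> real) \<Rightarrow> 'y list \<Rightarrow> 'x list set" where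
  "cond_typeclass_set n P J ys = {xs \<in> typeclass_set n P. jtype xs ys = J}"

lemma finite_cond_typeclass_set: "finite (cond_typeclass_set n (P :: 'x::finite \<Rightarrow> real) J ys)"
  unfolding cond_typeclass_set_def by (rule finite_subset[OF _ finite_typeclass_set]) auto

lemma card_cond_typeclass_set_le:
  fixes ys ys' :: "'y::finite list"
  assumes "mset ys = mset ys'" "length ys = n"
  shows "card (cond_typeclass_set n P J ys) \<le> card (cond_typeclass_set n (P :: 'x::finite \<Rightarrow> real) J ys')"
proof -
  obtain p where "p permutes {..<length ys}" "permute_list p ys = ys'"
    by (rule mset_eq_permutation[OF assms(1)[symmetric]])
  then have p: "p permutes {..<n}" "permute_list p ys = ys'" using assms(2) by simp_all
  have undo: "permute_list (inv p) (permute_list p xs) = xs" if "length xs = n" for xs :: "'x list"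
    using permute_list_compose[of "inv p" xs p] permutes_inv[OF p(1)] permutes_inv_o(1)[OF p(1)] that
    by (simp add: permute_list_id)
  have "inj_on (permute_list p) (cond_typeclass_set n P J ys)"
    by (rule inj_on_inverseI[where g = "permute_list (inv p)"])
       (simp add: undo cond_typeclass_set_def typeclass_set_def)
  moreover have "permute_list p ` cond_typeclass_set n P J ys \<subseteq> cond_typeclass_set n P J ys'"
  proof
    fix xs' assume "xs' \<in> permute_list p ` cond_typeclass_set n P J ys"
    then obtain xs where xs: "xs \<in> cond_typeclass_set n P J ys" and xs': "xs' = permute_list p xs" by blast
    have len: "length xs = n" using xs by (simp add: cond_typeclass_set_def typeclass_set_def)
    have p_xs: "p permutes {..<length xs}" using p(1) len by simp
    have "ltype xs' = ltype xs"
      using ltype_eq_iff_mset_eq[of xs' xs] p_xs by (simp add: xs')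
    moreover have "jtype xs' ys' = jtype xs ys"
    proof -
      have "zip xs' ys' = permute_list p (zip xs ys)"
        using permute_list_zip[OF p_xs refl, of ys] len assms(2) by (simp add: xs' p(2)[symmetric])
      then show ?thesis
        using ltype_eq_iff_mset_eq[of "permute_list p (zip xs ys)" "zip xs ys"] p_xs len assms(2)
        by (simp add: jtype_def)
    qed
    ultimately show "xs' \<in> cond_typeclass_set n P J ys'"
      using xs len by (simp add: xs' cond_typeclass_set_def typeclass_set_def)
  qed
  ultimately show ?thesis by (rule card_inj_on_le[OF _ _ finite_cond_typeclass_set])
qed

(* So breve_p does not depend on the representative chosen by SOME. *)
lemma card_cond_typeclass_set_eq:
  fixes ys ys' :: "'y::finite list"
  assumes "ys \<in> typeclass_set n Q" "ys' \<in> typeclass_set n Q"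
  shows "card (cond_typeclass_set n P J ys) = card (cond_typeclass_set n (P :: 'x::finite \<Rightarrow> real) J ys')"
proof -
  have "length ys = n" "length ys' = n" "ltype ys = ltype ys'"
    using assms by (auto simp: typeclass_set_def)
  moreover from this have "mset ys = mset ys'" using ltype_eq_iff_mset_eq[of ys ys'] by simp
  ultimately show ?thesis by (intro le_antisym card_cond_typeclass_set_le) simp_all
qed

lemma card_typeclass_set_jtype:
  fixes xs0 :: "'x::finite list" and ys0 :: "'y::finite list"
  assumes "length xs0 = n" "length ys0 = n" "ys \<in> typeclass_set n (ltype ys0)"
  shows "card (typeclass_set n (jtype xs0 ys0))
    = card (typeclass_set n (ltype ys0)) * card (cond_typeclass_set n (ltype xs0) (jtype xs0 ys0) ys)"
proof -
  define J where "J = jtype xs0 ys0"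
  define S where "S = (SIGMA ys':typeclass_set n (ltype ys0). cond_typeclass_set n (ltype xs0) J ys')"
  have marg_fst: "ltype (map fst zs) = ltype xs0" if "ltype zs = J" for zs
    using that sum_ltype_fst[of zs] sum_jtype_fst[of xs0 ys0] assms by (auto simp: J_def fun_eq_iff)
  have marg_snd: "ltype (map snd zs) = ltype ys0" if "ltype zs = J" for zs
    using that margY_ltype[of zs] margY_jtype[of xs0 ys0] assms by (simp add: J_def)
  have "bij_betw (\<lambda>(ys', xs). zip xs ys') S (typeclass_set n J)"
  proof (rule bij_betw_byWitness[where f' = "\<lambda>zs. (map snd zs, map fst zs)"])
    show "\<forall>u\<in>S. (\<lambda>zs. (map snd zs, map fst zs)) ((\<lambda>(ys', xs). zip xs ys') u) = u"
      by (auto simp: S_def cond_typeclass_set_def typeclass_set_def)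
    show "\<forall>zs\<in>typeclass_set n J. (\<lambda>(ys', xs). zip xs ys') (map snd zs, map fst zs) = zs"
      by (simp add: zip_map_fst_snd)
    show "(\<lambda>(ys', xs). zip xs ys') ` S \<subseteq> typeclass_set n J"
      by (auto simp: S_def cond_typeclass_set_def typeclass_set_def jtype_def)
    show "(\<lambda>zs. (map snd zs, map fst zs)) ` typeclass_set n J \<subseteq> S"
      using marg_fst marg_snd
      by (auto simp: S_def cond_typeclass_set_def typeclass_set_def jtype_def zip_map_fst_snd)
  qed
  then have "card (typeclass_set n J) = card S" by (simp add: bij_betw_same_card)
  also have "\<dots> = (\<Sum>ys'\<in>typeclass_set n (ltype ys0). card (cond_typeclass_set n (ltype xs0) J ys'))"
    unfolding S_def by (rule card_SigmaI) (auto intro: finite_typeclass_set finite_cond_typeclass_set)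
  also have "\<dots> = (\<Sum>ys'\<in>typeclass_set n (ltype ys0). card (cond_typeclass_set n (ltype xs0) J ys))"
    using card_cond_typeclass_set_eq[OF _ assms(3)] by (intro sum.cong) auto
  also have "\<dots> = card (typeclass_set n (ltype ys0)) * card (cond_typeclass_set n (ltype xs0) J ys)"
    by simp
  finally show ?thesis by (simp add: J_def)
qed

lemma breve_p_cond_types:
  fixes J :: "'x::finite \<times> 'y::finite \<Rightarrow> real"
  assumes "J \<in> cond_types n P"
  shows "breve_p n P J = real (card (typeclass_set n J))
    / (real (card (typeclass_set n (margY J))) * real (card (typeclass_set n P)))"
proof -
  obtain xs ys where xs: "length xs = n" "ltype xs = P" and ys: "length ys = n" and J_eq: "J = jtype xs ys"
    using assms by (auto simp: cond_types_def typeclass_set_def)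
  have margY: "margY J = ltype ys" using xs ys by (simp add: J_eq margY_jtype)
  define ys' where "ys' = (SOME ys'. ys' \<in> typeclass_set n (margY J))"
  have "ys \<in> typeclass_set n (ltype ys)" using ys by (simp add: typeclass_set_def)
  then have ys': "ys' \<in> typeclass_set n (ltype ys)" unfolding ys'_def margY by (rule someI)
  have "card (typeclass_set n (ltype ys)) > 0" using card_typeclass_set_ltype_pos[of ys] ys by simp
  then show ?thesis
    using card_typeclass_set_jtype[OF xs(1) ys ys']
    unfolding breve_p_def Let_def ys'_def[symmetric] unfolding margY unfolding xs(2) J_eq
    by (simp add: cond_typeclass_set_def)
qed

lemma mem_cond_types_iff:
  "J \<in> cond_types n P \<longleftrightarrow> (\<exists>zs. length zs = n \<and> ltype (map fst zs) = P \<and> J = ltype zs)"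
proof
  assume "J \<in> cond_types n P"
  then obtain xs ys where "length xs = n" "length ys = n" "ltype xs = P" "J = jtype xs ys"
    by (auto simp: cond_types_def typeclass_set_def)
  then show "\<exists>zs. length zs = n \<and> ltype (map fst zs) = P \<and> J = ltype zs"
    by (intro exI[of _ "zip xs ys"]) (simp add: jtype_def)
next
  assume "\<exists>zs. length zs = n \<and> ltype (map fst zs) = P \<and> J = ltype zs"
  then obtain zs where "length zs = n" "ltype (map fst zs) = P" "J = ltype zs" by blast
  then show "J \<in> cond_types n P"
    unfolding cond_types_def typeclass_set_def jtype_def
    by (intro CollectI exI[of _ "map fst zs"] exI[of _ "map snd zs"]) (simp add: zip_map_fst_snd)
qed

lemma cond_types_nonneg: "J \<in> cond_types n P \<Longrightarrow> J a \<ge> 0"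
  by (auto simp: mem_cond_types_iff ltype_nonneg)

lemma sum_cond_types_fst:
  "J \<in> cond_types n P \<Longrightarrow> (\<Sum>y\<in>UNIV. J (x, y :: 'y::finite)) = P x"
  by (auto simp: mem_cond_types_iff sum_ltype_fst)

lemma finite_cond_types: "finite (cond_types n (P :: 'x::finite \<Rightarrow> real) :: ('x \<times> 'y::finite \<Rightarrow> real) set)"
proof -
  have "cond_types n P \<subseteq> ltype ` {zs :: ('x \<times> 'y) list. set zs \<subseteq> UNIV \<and> length zs = n}"
    by (auto simp: mem_cond_types_iff)
  moreover have "finite {zs :: ('x \<times> 'y) list. set zs \<subseteq> UNIV \<and> length zs = n}"
    by (rule finite_lists_length_eq) simp
  ultimately show ?thesis by (rule finite_subset[OF _ finite_imageI])
qed

definition supported_by :: "('x \<Rightarrow> 'y \<Rightarrow> real) \<Rightarrow> ('x \<times> 'y \<Rightarrow> real) \<Rightarrow> bool" where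
  "supported_by W J \<longleftrightarrow> (\<forall>x y. J (x, y) > 0 \<longrightarrow> W x y > 0)"

lemma supported_by_ltype_iff: "supported_by W (ltype zs) \<longleftrightarrow> (\<forall>(x, y) \<in> set zs. W x y > 0)"
  by (auto simp: supported_by_def ltype_pos_iff)

definition mean_info_density :: "('x::finite \<Rightarrow> 'y::finite \<Rightarrow> real) \<Rightarrow> ('x \<times> 'y \<Rightarrow> real) \<Rightarrow> real" where
  "mean_info_density W J = - (\<Sum>(x, y)\<in>UNIV. J (x, y) * ln (W x y))"

definition mutual_info :: "('x::finite \<Rightarrow> real) \<Rightarrow> ('x \<times> 'y::finite \<Rightarrow> real) \<Rightarrow> real" where
  "mutual_info P J = entropy P + entropy (margY J) - entropy J"

lemma rel_ent_eq_sum: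
  fixes J K :: "'a::finite \<Rightarrow> real"
  assumes "\<And>a. J a \<ge> 0" and "\<And>a. J a > 0 \<Longrightarrow> K a > 0"
  shows "rel_ent J K = ereal (- entropy J - (\<Sum>a\<in>UNIV. J a * ln (K a)))"
proof -
  have "(if J a = 0 then 0 else J a * ln (J a / K a)) = J a * ln (J a) - J a * ln (K a)" for a
    using assms[of a] by (cases "J a = 0") (auto simp: ln_div right_diff_distrib)
  moreover have "\<not> (\<exists>a. J a > 0 \<and> K a = 0)" using assms(2) by force
  ultimately show ?thesis by (simp add: rel_ent_def entropy_def sum_subtractf)
qed

lemma sum_UNIV_pair: "(\<Sum>a\<in>UNIV. g a) = (\<Sum>x\<in>UNIV. \<Sum>y\<in>UNIV. g (x :: 'x::finite, y :: 'y::finite))"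
  unfolding UNIV_Times_UNIV[symmetric] sum.cartesian_product by (simp add: case_prod_beta)

lemma sum_pair_weighted_fst:
  fixes J :: "'x::finite \<times> 'y::finite \<Rightarrow> real"
  shows "(\<Sum>a\<in>UNIV. J a * f (fst a)) = (\<Sum>x\<in>UNIV. (\<Sum>y\<in>UNIV. J (x, y)) * f x)"
  by (simp add: sum_UNIV_pair sum_distrib_right)

lemma sum_pair_weighted_snd:
  fixes J :: "'x::finite \<times> 'y::finite \<Rightarrow> real"
  shows "(\<Sum>a\<in>UNIV. J a * f (snd a)) = (\<Sum>y\<in>UNIV. margY J y * f y)"
  by (simp add: sum_UNIV_pair margY_def sum_distrib_right) (rule sum.swap)

lemma rel_ent_channel:
  fixes W :: "'x::finite \<Rightarrow> 'y::finite \<Rightarrow> real"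
  assumes J: "J \<in> cond_types n P" and supp: "supported_by W J"
  shows "rel_ent J (\<lambda>(x, y). P x * W x y) = ereal (entropy P - entropy J + mean_info_density W J)"
proof -
  have pos: "P x > 0 \<and> W x y > 0" if "J (x, y) > 0" for x y
    using sum_pos2[of UNIV y "\<lambda>y. J (x, y)"] that supp cond_types_nonneg[OF J]
      sum_cond_types_fst[OF J] by (auto simp: supported_by_def)
  have "J a * ln (case a of (x, y) \<Rightarrow> P x * W x y) = J a * ln (P (fst a)) + J a * ln (W (fst a) (snd a))" for a
    using pos[of "fst a" "snd a"] cond_types_nonneg[OF J, of a]
    by (cases "J a = 0") (auto simp: ln_mult case_prod_beta algebra_simps)
  then have "(\<Sum>a\<in>UNIV. J a * ln (case a of (x, y) \<Rightarrow> P x * W x y))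
      = (\<Sum>x\<in>UNIV. P x * ln (P x)) - mean_info_density W J"
    by (simp add: sum.distrib sum_pair_weighted_fst[of J "\<lambda>x. ln (P x)"] sum_cond_types_fst[OF J]
        mean_info_density_def case_prod_beta)
  then show ?thesis
    using pos cond_types_nonneg[OF J] by (subst rel_ent_eq_sum) (auto simp: entropy_def)
qed

lemma rel_ent_product_of_marginals:
  fixes P :: "'x::finite \<Rightarrow> real" and J :: "'x \<times> 'y::finite \<Rightarrow> real"
  assumes J: "J \<in> cond_types n P"
  shows "rel_ent J (\<lambda>(x, y). P x * margY J y) = ereal (mutual_info P J)"
proof -
  have pos: "P x > 0 \<and> margY J y > 0" if "J (x, y) > 0" for x y
    using sum_pos2[of UNIV y "\<lambda>y. J (x, y)"] sum_pos2[of UNIV x "\<lambda>x. J (x, y)"] that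
      cond_types_nonneg[OF J] sum_cond_types_fst[OF J] by (auto simp: margY_def)
  have "J a * ln (case a of (x, y) \<Rightarrow> P x * margY J y) = J a * ln (P (fst a)) + J a * ln (margY J (snd a))" for a
    using pos[of "fst a" "snd a"] cond_types_nonneg[OF J, of a]
    by (cases "J a = 0") (auto simp: ln_mult case_prod_beta algebra_simps)
  then have "(\<Sum>a\<in>UNIV. J a * ln (case a of (x, y) \<Rightarrow> P x * margY J y))
      = (\<Sum>x\<in>UNIV. P x * ln (P x)) + (\<Sum>y\<in>UNIV. margY J y * ln (margY J y))"
    by (simp add: sum.distrib sum_pair_weighted_fst[of J "\<lambda>x. ln (P x)"]
        sum_pair_weighted_snd[of J "\<lambda>y. ln (margY J y)"] sum_cond_types_fst[OF J])
  then show ?thesis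
    using pos cond_types_nonneg[OF J]
    by (subst rel_ent_eq_sum) (auto simp: entropy_def mutual_info_def)
qed

lemma rel_ent_channel_unsupported:
  assumes "\<not> supported_by W J" and "\<forall>x y. W x y \<ge> 0"
  shows "rel_ent J (\<lambda>(x, y). P x * W x y) = \<infinity>"
proof -
  obtain x y where "J (x, y) > 0" "\<not> W x y > 0"
    using assms(1) by (auto simp: supported_by_def)
  moreover from this have "W x y = 0" using assms(2) by (simp add: order.antisym not_less)
  ultimately show ?thesis unfolding rel_ent_def by (auto intro!: exI[of _ "(x, y)"])
qed

definition objective :: "('x \<Rightarrow> 'y \<Rightarrow> real) \<Rightarrow> real \<Rightarrow> ('x \<Rightarrow> real) \<Rightarrow> ('x \<times> 'y \<Rightarrow> real) \<Rightarrow> ereal" where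
  "objective W R P J = rel_ent J (\<lambda>(x, y). P x * W x y)
     + ereal (1/2) * max 0 (ereal R - rel_ent J (\<lambda>(x, y). P x * margY J y))"

definition objective_real :: "('x::finite \<Rightarrow> 'y::finite \<Rightarrow> real) \<Rightarrow> real \<Rightarrow> ('x \<Rightarrow> real) \<Rightarrow> ('x \<times> 'y \<Rightarrow> real) \<Rightarrow> real" where
  "objective_real W R P J = (entropy P - entropy J + mean_info_density W J) + 1/2 * max 0 (R - mutual_info P J)"

lemma objective_supported:
  fixes W :: "'x::finite \<Rightarrow> 'y::finite \<Rightarrow> real"
  assumes "J \<in> cond_types n P" and "supported_by W J"
  shows "objective W R P J = ereal (objective_real W R P J)"
  unfolding objective_def objective_real_def rel_ent_channel[OF assms] rel_ent_product_of_marginals[OF assms(1)]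
  by (simp add: max_def)

lemma objective_unsupported:
  assumes "\<not> supported_by W J" and "\<forall>x y. W x y \<ge> 0"
  shows "objective W R P J = \<infinity>"
proof -
  have "ereal (1/2) * max 0 t \<noteq> - \<infinity>" for t by (cases t) (auto simp: max_def)
  then show ?thesis by (simp add: objective_def rel_ent_channel_unsupported[OF assms])
qed

section \<open>Exponential behaviour of the lhs term\<close>

lemma chan_exp_supported:
  fixes W :: "'x::finite \<Rightarrow> 'y::finite \<Rightarrow> real"
  assumes "supported_by W J" and "\<And>a. J a \<ge> 0"
  shows "chan_exp n W J = exp (- real n * mean_info_density W J)"
proof -
  have "(case a of (x, y) \<Rightarrow> if J (x, y) = 0 then 1 else W x y powr (real n * J (x, y)))
      = exp (real n * (J a * ln (W (fst a) (snd a))))" for a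
  proof (cases "J a = 0")
    case False
    then have "W (fst a) (snd a) > 0"
      using assms[unfolded supported_by_def] less_eq_real_def by (metis prod.collapse)
    then show ?thesis using False by (simp add: case_prod_beta powr_def algebra_simps)
  qed (simp add: case_prod_beta)
  then have "chan_exp n W J = (\<Prod>a\<in>UNIV. exp (real n * (J a * ln (W (fst a) (snd a)))))"
    by (simp add: chan_exp_def)
  also have "\<dots> = exp (\<Sum>a\<in>UNIV. real n * (J a * ln (W (fst a) (snd a))))"
    by (simp add: exp_sum)
  finally show ?thesis
    by (simp add: mean_info_density_def sum_distrib_left case_prod_beta sum_negf)
qed

lemma lhs_term_unsupported:
  fixes W :: "'x::finite \<Rightarrow> 'y::finite \<Rightarrow> real"
  assumes "n > 0" and "\<not> supported_by W J" and "\<forall>x y. W x y \<ge> 0"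
  shows "lhs_term W R n P J = 0"
proof -
  obtain x y where "J (x, y) > 0" "\<not> W x y > 0" using assms(2) by (auto simp: supported_by_def)
  moreover from this have "W x y = 0" using assms(3) by (simp add: order.antisym not_less)
  ultimately have "chan_exp n W J = 0"
    unfolding chan_exp_def using assms(1) by (intro prod_zero) (auto intro!: exI[of _ x] exI[of _ y])
  then show ?thesis by (simp add: lhs_term_def)
qed

lemma typeclass_set_ltype_bounds:
  fixes xs :: "'a::finite list"
  assumes "xs \<noteq> []" and "CARD('a) \<le> c"
  shows "card (typeclass_set (length xs) (ltype xs)) > 0
    \<and> \<bar>ln (real (card (typeclass_set (length xs) (ltype xs)))) - real (length xs) * entropy (ltype xs)\<bar>
      \<le> type_count_err c (length xs)"
  using card_typeclass_set_ltype_pos[of xs] ln_card_typeclass_set_approx[OF assms(1)]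
    type_count_err_mono[OF assms(2), of "length xs"] by simp

lemma CARD_le_CARD_prod_fst: "CARD('a::finite) \<le> CARD('a \<times> 'b::finite)"
  using finite_UNIV_card_ge_0[where 'a = 'b]
  by (simp add: card_cartesian_product flip: UNIV_Times_UNIV)

lemma CARD_le_CARD_prod_snd: "CARD('b::finite) \<le> CARD('a::finite \<times> 'b)"
  using finite_UNIV_card_ge_0[where 'a = 'a]
  by (simp add: card_cartesian_product flip: UNIV_Times_UNIV)

lemma cond_types_typeclass_bounds:
  fixes J :: "'x::finite \<times> 'y::finite \<Rightarrow> real"
  assumes "J \<in> cond_types n P" and "n > 0"
  shows "card (typeclass_set n J) > 0
      \<and> \<bar>ln (real (card (typeclass_set n J))) - real n * entropy J\<bar> \<le> type_count_err CARD('x \<times> 'y) n"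
    and "card (typeclass_set n P) > 0
      \<and> \<bar>ln (real (card (typeclass_set n P))) - real n * entropy P\<bar> \<le> type_count_err CARD('x \<times> 'y) n"
    and "card (typeclass_set n (margY J)) > 0
      \<and> \<bar>ln (real (card (typeclass_set n (margY J)))) - real n * entropy (margY J)\<bar>
        \<le> type_count_err CARD('x \<times> 'y) n"
proof -
  obtain zs where zs: "length zs = n" "ltype (map fst zs) = P" "J = ltype zs"
    using assms(1) by (auto simp: mem_cond_types_iff)
  have "zs \<noteq> []" using zs(1) assms(2) by auto
  then show "card (typeclass_set n J) > 0
      \<and> \<bar>ln (real (card (typeclass_set n J))) - real n * entropy J\<bar> \<le> type_count_err CARD('x \<times> 'y) n"
    using typeclass_set_ltype_bounds[OF _ order_refl, of zs] zs by simp
  show "card (typeclass_set n P) > 0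
      \<and> \<bar>ln (real (card (typeclass_set n P))) - real n * entropy P\<bar> \<le> type_count_err CARD('x \<times> 'y) n"
    using typeclass_set_ltype_bounds[OF _ CARD_le_CARD_prod_fst, of "map fst zs"] \<open>zs \<noteq> []\<close> zs by simp
  show "card (typeclass_set n (margY J)) > 0
      \<and> \<bar>ln (real (card (typeclass_set n (margY J)))) - real n * entropy (margY J)\<bar>
        \<le> type_count_err CARD('x \<times> 'y) n"
    using typeclass_set_ltype_bounds[OF _ CARD_le_CARD_prod_snd, of "map snd zs"] \<open>zs \<noteq> []\<close> zs
    by (simp add: margY_ltype)
qed

lemma ln_breve_p_approx:
  fixes J :: "'x::finite \<times> 'y::finite \<Rightarrow> real"
  assumes "J \<in> cond_types n P" and "n > 0"
  shows "breve_p n P J > 0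
    \<and> \<bar>ln (breve_p n P J) + real n * mutual_info P J\<bar> \<le> 3 * type_count_err CARD('x \<times> 'y) n"
proof -
  note bounds = cond_types_typeclass_bounds[OF assms]
  have "breve_p n P J > 0 \<and> ln (breve_p n P J) = ln (real (card (typeclass_set n J)))
      - ln (real (card (typeclass_set n (margY J)))) - ln (real (card (typeclass_set n P)))"
    using bounds by (simp add: breve_p_cond_types[OF assms(1)] ln_div ln_mult)
  then show ?thesis
    using bounds unfolding mutual_info_def abs_le_iff by (simp add: algebra_simps)
qed

lemma breve_Y_exp:
  assumes "breve_p n P J > 0"
  shows "breve_Y (exp (real n * R)) n P J
    = exp (min (ln 2 + ln (breve_p n P J)) ((ln (breve_p n P J) - real n * R) / 2))"
proof -
  have "2 * breve_p n P J = exp (ln 2 + ln (breve_p n P J))" using assms by (simp add: exp_add)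
  moreover have "exp (real n * R) powr (-1/2) * sqrt (breve_p n P J)
      = exp ((ln (breve_p n P J) - real n * R) / 2)"
    using assms by (simp add: powr_def powr_half_sqrt[symmetric] mult_exp_exp diff_divide_distrib)
  ultimately show ?thesis by (simp add: breve_Y_def min_def)
qed

lemma lhs_term_exp:
  fixes W :: "'x::finite \<Rightarrow> 'y::finite \<Rightarrow> real"
  assumes J: "J \<in> cond_types n P" and supp: "supported_by W J" and n: "n > 0"
  shows "lhs_term W R n P J = exp (- ln 2 + ln (real (card (typeclass_set n (margY J))))
    - real n * mean_info_density W J + min (ln 2 + ln (breve_p n P J)) ((ln (breve_p n P J) - real n * R) / 2))"
proof -
  have "card (typeclass_set n (margY J)) > 0" and p: "breve_p n P J > 0"
    using cond_types_typeclass_bounds(3)[OF J n] ln_breve_p_approx[OF J n] by simp_all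
  then show ?thesis
    unfolding lhs_term_def breve_Y_exp[OF p] chan_exp_supported[OF supp cond_types_nonneg[OF J]]
    by (simp add: exp_add exp_diff exp_minus field_simps)
qed

(* The min in breve_Y and the positive part in the exponent cancel up to c = ln 2. *)
lemma abs_min_max_le:
  fixes c u v r :: real
  assumes "0 \<le> c"
  shows "\<bar>v + min (c + u) ((u - r) / 2) + max 0 (r - v) / 2\<bar> \<le> c + \<bar>u + v\<bar>"
  using assms by (auto simp: min_def max_def abs_if field_simps)

lemma ln_lhs_term_approx:
  fixes W :: "'x::finite \<Rightarrow> 'y::finite \<Rightarrow> real"
  assumes J: "J \<in> cond_types n P" and supp: "supported_by W J" and n: "n > 0"
  shows "lhs_term W R n P J > 0 \<and>
    \<bar>ln (lhs_term W R n P J) + real n * objective_real W R P J\<bar> \<le> 2 + 4 * type_count_err CARD('x \<times> 'y) n"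
proof -
  define p where "p = breve_p n P J"
  define cY where "cY = real (card (typeclass_set n (margY J)))"
  define I where "I = real n * mutual_info P J"
  have bY: "\<bar>ln cY - real n * entropy (margY J)\<bar> \<le> type_count_err CARD('x \<times> 'y) n"
    using cond_types_typeclass_bounds(3)[OF J n] by (simp add: cY_def)
  have bp: "\<bar>ln p + I\<bar> \<le> 3 * type_count_err CARD('x \<times> 'y) n"
    using ln_breve_p_approx[OF J n] by (simp add: p_def I_def)
  have obj: "real n * objective_real W R P J
      = real n * entropy P - real n * entropy J + real n * mean_info_density W J + max 0 (real n * R - I) / 2"
  proof -
    have "real n * max 0 (R - mutual_info P J) = max 0 (real n * R - I)"
      by (simp add: I_def max_mult_distrib_left right_diff_distrib)
    then show ?thesis by (simp add: objective_real_def distrib_left right_diff_distrib)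
  qed
  have "ln (lhs_term W R n P J) + real n * objective_real W R P J
      = (ln cY - real n * entropy (margY J) - ln 2)
        + (I + min (ln 2 + ln p) ((ln p - real n * R) / 2) + max 0 (real n * R - I) / 2)"
    unfolding lhs_term_exp[OF J supp n] obj ln_exp p_def[symmetric] cY_def[symmetric]
    by (simp add: I_def mutual_info_def algebra_simps)
  moreover have "\<bar>I + min (ln 2 + ln p) ((ln p - real n * R) / 2) + max 0 (real n * R - I) / 2\<bar>
      \<le> ln 2 + \<bar>ln p + I\<bar>"
    by (rule abs_min_max_le) simp
  moreover have "0 \<le> ln (2::real)" "ln (2::real) \<le> 1" using ln_2_less_1 by simp_all
  ultimately show ?thesis
    using bY bp unfolding lhs_term_exp[OF J supp n] abs_le_iff by simp linarith
qed

section \<open>Approximation by longer joint types\<close>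

lemma count_list_concat_replicate: "count_list (concat (replicate q xs)) a = q * count_list xs a"
  by (induction q) simp_all

lemma concat_replicate_mix:
  fixes xs0 xs1 :: "'a list" and k :: nat
  assumes "length xs0 = m * k0" and "length xs1 = m"
  defines "xs \<equiv> concat (replicate (k div k0) xs0) @ concat (replicate (k mod k0) xs1)"
  shows "length xs = m * k"
    and "real (m * k) * ltype xs a
      = (real k - real (k mod k0)) * (real m * ltype xs0 a) + real (k mod k0) * (real m * ltype xs1 a)"
proof -
  have "length xs = k div k0 * (m * k0) + k mod k0 * m"
    using assms(1,2) by (simp add: xs_def length_concat sum_list_replicate)
  also have "\<dots> = m * (k div k0 * k0 + k mod k0)"
    by (simp only: distrib_left mult.commute mult.left_commute)
  finally show len: "length xs = m * k" by (simp only: div_mult_mod_eq)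
  have "real (m * k) * ltype xs a = real (count_list xs a)"
    using length_mult_ltype[of xs a] by (simp add: len)
  also have "\<dots> = real (k div k0) * real (count_list xs0 a) + real (k mod k0) * real (count_list xs1 a)"
    by (simp add: xs_def count_list_concat_replicate)
  also have "\<dots> = (real (k div k0) * real k0) * (real m * ltype xs0 a) + real (k mod k0) * (real m * ltype xs1 a)"
    using length_mult_ltype[of xs0 a] length_mult_ltype[of xs1 a] assms(1,2) by (simp add: algebra_simps)
  also have "real (k div k0) * real k0 = real k - real (k mod k0)"
    by (metis add_diff_cancel_right' div_mult_mod_eq of_nat_add of_nat_mult)
  finally show "real (m * k) * ltype xs a
      = (real k - real (k mod k0)) * (real m * ltype xs0 a) + real (k mod k0) * (real m * ltype xs1 a)" .
qed

lemma tendsto_mod_over_self: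
  assumes "k0 > 0"
  shows "(\<lambda>k. real (k mod k0) / real k) \<longlonglongrightarrow> 0"
proof (rule tendsto_sandwich[of "\<lambda>_. 0" _ _ "\<lambda>k. real k0 / real k"])
  have "real (k mod k0) / real k \<le> real k0 / real k" for k
    using assms by (intro divide_right_mono) simp_all
  then show "\<forall>\<^sub>F k in sequentially. real (k mod k0) / real k \<le> real k0 / real k" by simp
qed (simp_all add: lim_const_over_n)

lemma cond_types_supported_approx:
  fixes W :: "'x::finite \<Rightarrow> 'y::finite \<Rightarrow> real"
  assumes J: "J \<in> cond_types (m * k0) P" "supported_by W J"
    and J1: "J1 \<in> cond_types m P" "supported_by W J1"
    and m: "m > 0" and k0: "k0 > 0"
  obtains Jk where "\<And>k. k > 0 \<Longrightarrow> Jk k \<in> cond_types (m * k) P \<and> supported_by W (Jk k)"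
    and "\<And>a. (\<lambda>k. Jk k a) \<longlonglongrightarrow> J a"
proof -
  obtain zs0 where zs0: "length zs0 = m * k0" "ltype (map fst zs0) = P" "J = ltype zs0"
    using J(1) by (auto simp: mem_cond_types_iff)
  obtain zs1 where zs1: "length zs1 = m" "ltype (map fst zs1) = P" "J1 = ltype zs1"
    using J1(1) by (auto simp: mem_cond_types_iff)
  define zs where "zs k = concat (replicate (k div k0) zs0) @ concat (replicate (k mod k0) zs1)" for k
  note mix = concat_replicate_mix[OF zs0(1) zs1(1), folded zs_def]
  show ?thesis
  proof
    fix k :: nat assume "k > 0"
    have "map fst (zs k)
        = concat (replicate (k div k0) (map fst zs0)) @ concat (replicate (k mod k0) (map fst zs1))"
      by (simp add: zs_def map_concat)
    then have "real (m * k) * ltype (map fst (zs k)) x = real (m * k) * P x" for x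
      using concat_replicate_mix(2)[of "map fst zs0" m k0 "map fst zs1" k x] zs0 zs1
      by (simp add: algebra_simps)
    then have "ltype (map fst (zs k)) = P" using m \<open>k > 0\<close> by (simp add: fun_eq_iff)
    moreover have "set (zs k) \<subseteq> set zs0 \<union> set zs1" by (auto simp: zs_def)
    ultimately show "ltype (zs k) \<in> cond_types (m * k) P \<and> supported_by W (ltype (zs k))"
      using J(2) J1(2) mix(1)[of k] unfolding mem_cond_types_iff supported_by_ltype_iff zs0(3) zs1(3)
      by blast
  next
    fix a
    have "(\<lambda>k. J a + real (k mod k0) / real k * (J1 a - J a)) \<longlonglongrightarrow> J a + 0 * (J1 a - J a)"
      by (intro tendsto_intros tendsto_mod_over_self k0)
    moreover have "\<forall>\<^sub>F k in sequentially. J a + real (k mod k0) / real k * (J1 a - J a) = ltype (zs k) a"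
      using eventually_gt_at_top[of 0]
    proof eventually_elim
      case (elim k)
      have "real m * (real k * ltype (zs k) a)
          = real m * ((real k - real (k mod k0)) * J a + real (k mod k0) * J1 a)"
        using mix(2)[of k a] zs0(3) zs1(3) by (simp add: algebra_simps)
      then have "real k * ltype (zs k) a = (real k - real (k mod k0)) * J a + real (k mod k0) * J1 a"
        using m by simp
      then show ?case using elim by (simp add: field_simps)
    qed
    ultimately show "(\<lambda>k. ltype (zs k) a) \<longlonglongrightarrow> J a" by (simp add: Lim_transform_eventually)
  qed
qed

lemma ex_supported_cond_type:
  fixes W :: "'x::finite \<Rightarrow> 'y::finite \<Rightarrow> real"
  assumes "\<And>x. \<exists>y. W x y > 0" and "is_type m P"
  shows "\<exists>J\<in>cond_types m P. supported_by W J"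
proof -
  obtain xs where xs: "length xs = m" "P = ltype xs" using assms(2) by (auto simp: is_type_def)
  define g where "g x = (SOME y. W x y > 0)" for x
  have g: "W x (g x) > 0" for x unfolding g_def using assms(1) by (rule someI_ex)
  have "ltype (map (\<lambda>x. (x, g x)) xs) \<in> cond_types m P"
    using xs by (auto simp: mem_cond_types_iff comp_def intro!: exI[of _ "map (\<lambda>x. (x, g x)) xs"])
  moreover have "supported_by W (ltype (map (\<lambda>x. (x, g x)) xs))"
    using g by (auto simp: supported_by_ltype_iff)
  ultimately show ?thesis by blast
qed

lemma is_type_mult:
  assumes "is_type m P" and "k > 0"
  shows "is_type (m * k) P"
proof -
  obtain xs where xs: "length xs = m" "P = ltype xs" using assms(1) by (auto simp: is_type_def)
  have "ltype (concat (replicate k xs)) = ltype xs"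
    using assms(2) by (simp add: fun_eq_iff ltype_def count_list_concat_replicate length_concat sum_list_replicate)
  then show ?thesis
    unfolding is_type_def using xs by (intro exI[of _ "concat (replicate k xs)"]) (simp add: length_concat sum_list_replicate)
qed

lemma isCont_x_ln_x: "isCont (\<lambda>t::real. t * ln t) a"
proof (cases "a = 0")
  case True
  have right: "((\<lambda>t::real. t * ln t) \<longlongrightarrow> 0) (at_right 0)" by real_asymp
  have "((\<lambda>t::real. - (t * ln t)) \<longlongrightarrow> 0) (at_right 0)" by real_asymp
  then have left: "((\<lambda>t::real. t * ln t) \<longlongrightarrow> 0) (at_left 0)"
    unfolding filterlim_at_left_to_right by (simp add: ln_minus)
  show ?thesis using filterlim_split_at[OF left right] True by (simp add: isCont_def)
qed (intro continuous_intros isCont_ln)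

lemma tendsto_entropy:
  fixes f :: "'b \<Rightarrow> 'a::finite \<Rightarrow> real"
  assumes "\<And>a. ((\<lambda>k. f k a) \<longlongrightarrow> g a) F"
  shows "((\<lambda>k. entropy (f k)) \<longlongrightarrow> entropy g) F"
  unfolding entropy_def
  by (intro tendsto_minus tendsto_sum isCont_tendsto_compose[OF isCont_x_ln_x, of "\<lambda>k. f k _"] assms)

lemma tendsto_objective_real:
  fixes f :: "'b \<Rightarrow> ('x::finite \<times> 'y::finite) \<Rightarrow> real"
  assumes lim: "\<And>a. ((\<lambda>k. f k a) \<longlongrightarrow> g a) F"
  shows "((\<lambda>k. objective_real W R P (f k)) \<longlongrightarrow> objective_real W R P g) F"
proof -
  have "((\<lambda>k. margY (f k) y) \<longlongrightarrow> margY g y) F" for y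
    unfolding margY_def by (intro tendsto_sum lim)
  then have "((\<lambda>k. mutual_info P (f k)) \<longlongrightarrow> mutual_info P g) F"
    unfolding mutual_info_def by (intro tendsto_intros tendsto_entropy lim)
  moreover have "((\<lambda>k. mean_info_density W (f k)) \<longlongrightarrow> mean_info_density W g) F"
    unfolding mean_info_density_def case_prod_beta by (intro tendsto_intros lim)
  ultimately show ?thesis
    unfolding objective_real_def by (intro tendsto_intros tendsto_entropy lim)
qed

lemma objective_approx:
  fixes W :: "'x::finite \<Rightarrow> 'y::finite \<Rightarrow> real"
  assumes W: "\<forall>x y. W x y \<ge> 0" and rows: "\<And>x. \<exists>y. W x y > 0" and P: "is_type m P" and m: "m > 0"
    and k0: "k0 > 0" and J: "J \<in> cond_types (m * k0) P" and finite: "objective W R P J < \<infinity>"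
  shows "\<exists>Jk. (\<forall>k>0. Jk k \<in> cond_types (m * k) P) \<and> (\<lambda>k. objective W R P (Jk k)) \<longlonglongrightarrow> objective W R P J"
proof -
  have supp: "supported_by W J" using finite objective_unsupported[OF _ W] by force
  have "\<exists>J1\<in>cond_types m P. supported_by W J1" by (rule ex_supported_cond_type[OF rows P])
  then obtain J1 where J1: "J1 \<in> cond_types m P" "supported_by W J1" ..
  obtain Jk where Jk: "\<And>k. k > 0 \<Longrightarrow> Jk k \<in> cond_types (m * k) P \<and> supported_by W (Jk k)"
    and lim: "\<And>a. (\<lambda>k. Jk k a) \<longlonglongrightarrow> J a"
    using cond_types_supported_approx[OF J supp J1 m k0] by blast
  have "(\<lambda>k. ereal (objective_real W R P (Jk k))) \<longlonglongrightarrow> ereal (objective_real W R P J)"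
    by (intro tendsto_ereal tendsto_objective_real lim)
  moreover have "\<forall>\<^sub>F k in sequentially. ereal (objective_real W R P (Jk k)) = objective W R P (Jk k)"
    using eventually_gt_at_top[of 0] by eventually_elim (metis Jk objective_supported)
  ultimately have "(\<lambda>k. objective W R P (Jk k)) \<longlonglongrightarrow> ereal (objective_real W R P J)"
    by (rule Lim_transform_eventually)
  then have "(\<lambda>k. objective W R P (Jk k)) \<longlonglongrightarrow> objective W R P J"
    by (simp only: objective_supported[OF J supp])
  then show ?thesis using Jk by blast
qed

definition max_lhs_exponent :: "('x::finite \<Rightarrow> 'y::finite \<Rightarrow> real) \<Rightarrow> real \<Rightarrow> nat \<Rightarrow> ('x \<Rightarrow> real) \<Rightarrow> real" where
  "max_lhs_exponent W R n P = - (1 / real n) * ln (Max (lhs_term W R n P ` cond_types n P))"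

definition exponent_err :: "nat \<Rightarrow> nat \<Rightarrow> real" where
  "exponent_err c n = (2 + 4 * type_count_err c n) / real n"

lemma max_lhs_exponent_le:
  fixes W :: "'x::finite \<Rightarrow> 'y::finite \<Rightarrow> real"
  assumes W: "\<forall>x y. W x y \<ge> 0" and n: "n > 0" and J: "J \<in> cond_types n P"
  shows "ereal (max_lhs_exponent W R n P) \<le> objective W R P J + ereal (exponent_err CARD('x \<times> 'y) n)"
proof (cases "supported_by W J")
  case True
  define C where "C = 2 + 4 * type_count_err CARD('x \<times> 'y) n"
  have lhs: "lhs_term W R n P J > 0" "ln (lhs_term W R n P J) \<ge> - real n * objective_real W R P J - C"
    using ln_lhs_term_approx[OF J True n, of R] by (auto simp: C_def abs_le_iff)
  have "lhs_term W R n P J \<le> Max (lhs_term W R n P ` cond_types n P)"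
    using J by (intro Max_ge finite_imageI finite_cond_types) auto
  then have "ln (lhs_term W R n P J) \<le> ln (Max (lhs_term W R n P ` cond_types n P))"
    using lhs(1) by simp
  then have "- ln (Max (lhs_term W R n P ` cond_types n P)) / real n
      \<le> (real n * objective_real W R P J + C) / real n"
    using lhs(2) n by (intro divide_right_mono) auto
  then have "max_lhs_exponent W R n P \<le> objective_real W R P J + C / real n"
    using n by (simp add: max_lhs_exponent_def add_divide_distrib)
  then show ?thesis by (simp add: objective_supported[OF J True] exponent_err_def C_def)
qed (simp add: objective_unsupported[OF _ W])

lemma max_lhs_exponent_ge:
  fixes W :: "'x::finite \<Rightarrow> 'y::finite \<Rightarrow> real"
  assumes W: "\<forall>x y. W x y \<ge> 0" and n: "n > 0" and ex: "\<exists>J\<in>cond_types n P. supported_by W J"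
  shows "\<exists>J\<in>cond_types n P. objective W R P J - ereal (exponent_err CARD('x \<times> 'y) n) \<le> ereal (max_lhs_exponent W R n P)"
proof -
  define A where "A = lhs_term W R n P ` cond_types n P"
  define C where "C = 2 + 4 * type_count_err CARD('x \<times> 'y) n"
  have fin: "finite A" unfolding A_def by (intro finite_imageI finite_cond_types)
  obtain J0 where J0: "J0 \<in> cond_types n P" "supported_by W J0" using ex by blast
  then have "0 < lhs_term W R n P J0" using ln_lhs_term_approx[OF J0 n] by blast
  also have "\<dots> \<le> Max A" using fin J0(1) by (intro Max_ge) (simp_all add: A_def)
  finally have Max_pos: "Max A > 0" .
  have "Max A \<in> A" using fin J0(1) by (intro Max_in) (auto simp: A_def)
  then obtain J where J: "J \<in> cond_types n P" "lhs_term W R n P J = Max A"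
    unfolding A_def by (metis imageE)
  have supp: "supported_by W J"
  proof (rule ccontr)
    assume "\<not> supported_by W J"
    then have "lhs_term W R n P J = 0" by (rule lhs_term_unsupported[OF n _ W])
    then show False using J(2) Max_pos by simp
  qed
  have "real n * objective_real W R P J - C \<le> - ln (Max A)"
    using ln_lhs_term_approx[OF J(1) supp n, of R] J(2) by (simp add: C_def abs_le_iff)
  then have "(real n * objective_real W R P J - C) / real n \<le> - ln (Max A) / real n"
    using n by (intro divide_right_mono) auto
  then have "objective_real W R P J - C / real n \<le> max_lhs_exponent W R n P"
    using n by (simp add: max_lhs_exponent_def A_def[symmetric] diff_divide_distrib)
  then show ?thesis
    using J(1) by (intro bexI[of _ J]) (simp_all add: objective_supported[OF J(1) supp] exponent_err_def C_def)
qed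

lemma tendsto_INF_of_uniform_bounds:
  fixes f :: "nat \<Rightarrow> ereal" and F :: "'j \<Rightarrow> ereal" and S :: "nat \<Rightarrow> 'j set" and E :: "nat \<Rightarrow> real"
  assumes E: "E \<longlonglongrightarrow> 0"
    and lower: "\<And>k. k > 0 \<Longrightarrow> \<exists>J\<in>S k. F J - ereal (E k) \<le> f k"
    and upper: "\<And>k J. k > 0 \<Longrightarrow> J \<in> S k \<Longrightarrow> f k \<le> F J + ereal (E k)"
    and approx: "\<And>k0 J. k0 > 0 \<Longrightarrow> J \<in> S k0 \<Longrightarrow> F J < \<infinity> \<Longrightarrow>
      \<exists>Jk. (\<forall>k>0. Jk k \<in> S k) \<and> (\<lambda>k. F (Jk k)) \<longlonglongrightarrow> F J"
  shows "f \<longlonglongrightarrow> (INF J\<in>(\<Union>k\<in>{1..}. S k). F J)"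
  (is "_ \<longlonglongrightarrow> ?L")
proof (rule order_tendstoI)
  fix a assume "a < ?L"
  then obtain c where c: "a < ereal c" "ereal c < ?L" using ereal_dense2 by blast
  then obtain c' where c': "ereal c < ereal c'" "ereal c' < ?L" using ereal_dense2 by blast
  have "c < c'" using c'(1) by simp
  have "\<forall>\<^sub>F k in sequentially. E k < c' - c" using order_tendstoD(2)[OF E] \<open>c < c'\<close> by simp
  then show "\<forall>\<^sub>F k in sequentially. a < f k"
    using eventually_gt_at_top[of 0]
  proof eventually_elim
    case (elim k)
    obtain J where J: "J \<in> S k" "F J - ereal (E k) \<le> f k" using lower[OF elim(2)] by blast
    have "?L \<le> F J" using J(1) elim(2) by (intro INF_lower) auto
    then have "ereal c' - ereal (E k) \<le> F J - ereal (E k)"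
      using c'(2) by (intro ereal_minus_mono) auto
    then have "ereal (c' - E k) \<le> f k" using J(2) by simp
    moreover have "a < ereal (c' - E k)" using c(1) elim(1) by (simp add: less_le_trans)
    ultimately show ?case by simp
  qed
next
  fix a assume "?L < a"
  then obtain J where J: "J \<in> (\<Union>k\<in>{1..}. S k)" "F J < a" by (auto simp: INF_less_iff)
  then obtain k0 where "k0 > 0" "J \<in> S k0" by (auto simp: Suc_le_eq)
  have "F J < \<infinity>" using J(2) by (cases "F J") auto
  then obtain Jk where Jk: "\<forall>k>0. Jk k \<in> S k" "(\<lambda>k. F (Jk k)) \<longlonglongrightarrow> F J"
    using approx[OF \<open>k0 > 0\<close> \<open>J \<in> S k0\<close>] by blast
  have "(\<lambda>k. F (Jk k) + ereal (E k)) \<longlonglongrightarrow> F J + ereal 0"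
    by (intro tendsto_add_ereal_general1 Jk(2) tendsto_ereal E) simp
  then have "\<forall>\<^sub>F k in sequentially. F (Jk k) + ereal (E k) < a"
    using J(2) by (intro order_tendstoD(2)) auto
  then show "\<forall>\<^sub>F k in sequentially. f k < a"
    using eventually_gt_at_top[of 0]
    by eventually_elim (use Jk(1) in \<open>auto intro: le_less_trans upper\<close>)
qed

lemma ex_pos_of_sum_eq_1: "(\<Sum>y\<in>UNIV. f y) = (1::real) \<Longrightarrow> \<exists>y. f y > 0"
  using sum_nonpos[of UNIV f] by (force simp: not_less)

theorem lemma17:
  fixes W :: "'x::finite \<Rightarrow> 'y::finite \<Rightarrow> real" and P :: "'x \<Rightarrow> real"
    and m :: nat and R :: real
  assumes "\<forall>x y. W x y \<ge> 0" and "\<forall>x. (\<Sum>y\<in>UNIV. W x y) = 1"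
    and "m > 0" and "is_type m P" and "R \<ge> 0"
  shows "(\<lambda>k. ereal (- (1 / real (m * k)) *
            ln (Max (lhs_term W R (m * k) P ` cond_types (m * k) P))))
         \<longlonglongrightarrow>
         (INF J\<in>(\<Union>k\<in>{1..}. cond_types (m * k) P).
            rel_ent J (\<lambda>(x, y). P x * W x y)
            + ereal (1/2) * max 0 (ereal R - rel_ent J (\<lambda>(x, y). P x * margY J y)))"
proof -
  have rows: "\<And>x. \<exists>y. W x y > 0" using assms(2) ex_pos_of_sum_eq_1 by blast
  have "(\<lambda>k. ereal (max_lhs_exponent W R (m * k) P))
      \<longlonglongrightarrow> (INF J\<in>(\<Union>k\<in>{1..}. cond_types (m * k) P). objective W R P J)"
  proof (rule tendsto_INF_of_uniform_bounds[where E = "\<lambda>k. exponent_err CARD('x \<times> 'y) (m * k)"])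
    show "(\<lambda>k. exponent_err CARD('x \<times> 'y) (m * k)) \<longlonglongrightarrow> 0"
      unfolding exponent_err_def type_count_err_def of_nat_mult using assms(3) by real_asymp
    show "\<exists>J\<in>cond_types (m * k) P. objective W R P J - ereal (exponent_err CARD('x \<times> 'y) (m * k))
        \<le> ereal (max_lhs_exponent W R (m * k) P)" if "k > 0" for k
      using ex_supported_cond_type[OF rows is_type_mult[OF assms(4) that]] assms(3) that
      by (intro max_lhs_exponent_ge[OF assms(1)]) simp_all
    show "ereal (max_lhs_exponent W R (m * k) P) \<le> objective W R P J + ereal (exponent_err CARD('x \<times> 'y) (m * k))"
      if "k > 0" "J \<in> cond_types (m * k) P" for k and J :: "'x \<times> 'y \<Rightarrow> real"
      using that assms(3) by (intro max_lhs_exponent_le[OF assms(1)]) simp_all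
  qed (rule objective_approx[OF assms(1) rows assms(4,3)])
  then show ?thesis unfolding max_lhs_exponent_def objective_def .
qed

end
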